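(* For all positive integers $\Delta$ and positive reals $\beta$ and $\mu_S$ there is $\mu_T>0$ such that the following holds. Let $S$ and $T$ be disjoint sets, $\mathcal{S}\subseteq\binom{S}{\Delta}$ a family of pairwise disjoint $\Delta$-sets in $S$ with $|\mathcal{S}|\le\frac1\Delta(1-\mu_S)|T|$, and $\mathcal{T}\subseteq\binom{T}{\Delta}$ a family of $\Delta$-sets in $T$ with $|\mathcal{T}|\le\mu_T|T|^\Delta$. Then a uniformly random injective function $f:S\to T$ satisfies $|f(\mathcal{S})\setminus\mathcal{T}|>(1-\beta)|\mathcal{S}|$ with probability at least $1-\beta^{|\mathcal{S}|}$.
   Context: $f(\mathcal{S})$ denotes the family $\{f(A):A\in\mathcal{S}\}$ of images of the sets in $\mathcal{S}$; $\binom{S}{\Delta}$ is the family of $\Delta$-element subsets of $S$. *)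

theory Defs
  imports "HOL-Probability.Probability"
begin

text \<open>The injective functions from S to T, as extensional functions
  (undefined outside S), so that there are finitely many of them.\<close>
definition inj_funs :: "'a set \<Rightarrow> 'b set \<Rightarrow> ('a \<Rightarrow> 'b) set" where
  "inj_funs S T = {f \<in> S \<rightarrow>\<^sub>E T. inj_on f S}"

end

theory Submission
  imports Defs
begin

definition falling_fact :: "nat \<Rightarrow> nat \<Rightarrow> nat" where
  "falling_fact n k = (\<Prod>i = 0..<k. n - i)"

lemma falling_fact_add: "falling_fact n (u + d) = falling_fact n u * falling_fact (n - u) d"
  by (induction d) (simp_all add: falling_fact_def)

lemma power_le_falling_fact: "(n - k) ^ k \<le> falling_fact n k"
proof -
  have "(\<Prod>i = 0..<k. n - k) \<le> (\<Prod>i = 0..<k. n - i)"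
    by (rule prod_mono) auto
  then show ?thesis by (simp add: falling_fact_def)
qed

lemma falling_fact_pos: "k \<le> n \<Longrightarrow> 0 < falling_fact n k"
  unfolding falling_fact_def by (rule prod_pos) auto

lemma finite_inj_funs: "finite S \<Longrightarrow> finite T \<Longrightarrow> finite (inj_funs S T)"
  unfolding inj_funs_def by (rule finite_subset[OF _ finite_PiE[of S "\<lambda>_. T"]]) auto

lemma card_inj_funs:
  "finite S \<Longrightarrow> finite T \<Longrightarrow> card (inj_funs S T) = falling_fact (card T) (card S)"
  using card_inj_on_subset_funcset[of S T S] by (simp add: inj_funs_def falling_fact_def)

lemma inj_on_restrict_family:
  "inj_on (\<lambda>g. \<lambda>A\<in>I. restrict g A) (\<Union>I \<rightarrow>\<^sub>E B)"
proof (rule inj_onI)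
  fix f g assume f: "f \<in> \<Union>I \<rightarrow>\<^sub>E B" and g: "g \<in> \<Union>I \<rightarrow>\<^sub>E B"
    and eq: "(\<lambda>A\<in>I. restrict f A) = (\<lambda>A\<in>I. restrict g A)"
  show "f = g"
  proof (rule extensionalityI[of _ "\<Union>I"])
    fix x assume "x \<in> \<Union>I"
    then obtain A where "A \<in> I" "x \<in> A" by blast
    then show "f x = g x" using fun_cong[OF fun_cong[OF eq, of A], of x] by simp
  qed (use f g in \<open>auto simp: PiE_def\<close>)
qed

lemma inj_on_restrict_Un: "inj_on (\<lambda>f. (restrict f X, restrict f Y)) (X \<union> Y \<rightarrow>\<^sub>E B)"
proof (rule inj_onI)
  fix f g assume f: "f \<in> X \<union> Y \<rightarrow>\<^sub>E B" and g: "g \<in> X \<union> Y \<rightarrow>\<^sub>E B"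
    and eq: "(restrict f X, restrict f Y) = (restrict g X, restrict g Y)"
  show "f = g"
  proof (rule extensionalityI[of _ "X \<union> Y"])
    fix x assume "x \<in> X \<union> Y"
    then show "f x = g x" using eq by (metis Pair_inject Un_iff restrict_apply')
  qed (use f g in \<open>auto simp: PiE_def\<close>)
qed

lemma card_inj_funs_restrict_le:
  assumes fS: "finite S" and fT: "finite T" and US: "U \<subseteq> S"
  shows "card {f \<in> inj_funs S T. P (restrict f U)}
     \<le> card {g \<in> inj_funs U T. P g} * falling_fact (card T - card U) (card S - card U)"
proof -
  let ?A = "{f \<in> inj_funs S T. P (restrict f U)}"
  let ?G = "{g \<in> inj_funs U T. P g}"
  let ?Sig = "Sigma ?G (\<lambda>g. inj_funs (S - U) (T - g ` U))"
  let ?h = "\<lambda>f. (restrict f U, restrict f (S - U))"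
  have "inj_on ?h ?A"
    by (rule inj_on_subset[OF inj_on_restrict_Un[of U "S - U" T]])
      (use US in \<open>auto simp: inj_funs_def Un_absorb1\<close>)
  moreover have "?h ` ?A \<subseteq> ?Sig"
  proof (rule image_subsetI)
    fix f assume "f \<in> ?A"
    then have f: "f \<in> inj_funs S T" "P (restrict f U)" by auto
    then have "f ` (S - U) \<subseteq> T - f ` U"
      using US by (auto simp: inj_funs_def inj_on_def)
    then show "?h f \<in> ?Sig"
      using f US by (auto simp: inj_funs_def image_restrict_eq intro: inj_on_subset)
  qed
  moreover have finG: "finite ?G"
    using finite_inj_funs[OF finite_subset[OF US fS] fT] by simp
  ultimately have "card ?A \<le> card ?Sig"
    by (intro card_inj_on_le) (use fS fT in \<open>auto intro!: finite_inj_funs\<close>)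
  also have "card ?Sig = (\<Sum>g\<in>?G. card (inj_funs (S - U) (T - g ` U)))"
    by (rule card_SigmaI) (use finG fS fT in \<open>auto intro!: finite_inj_funs\<close>)
  also have "\<dots> = card ?G * falling_fact (card T - card U) (card S - card U)"
  proof -
    have "card (T - g ` U) = card T - card U" if "g \<in> ?G" for g
    proof -
      from that have "inj_on g U" "g ` U \<subseteq> T" by (auto simp: inj_funs_def)
      then show ?thesis using fT by (simp add: card_Diff_subset card_image finite_subset)
    qed
    moreover have "card (S - U) = card S - card U"
      using US fS by (simp add: card_Diff_subset finite_subset)
    ultimately show ?thesis using fS fT by (simp add: card_inj_funs)
  qed
  finally show ?thesis .
qed

lemma card_funs_image_in_le:
  assumes fA: "finite A" and fT: "finite T" and TT: "TT \<subseteq> {B. B \<subseteq> T \<and> card B = card A}"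
  shows "card {h \<in> A \<rightarrow>\<^sub>E T. h ` A \<in> TT} \<le> card TT * card A ^ card A"
proof -
  have fTT: "finite TT"
    by (rule finite_subset[OF _ finite_Collect_subsets[OF fT]]) (use TT in auto)
  have "{h \<in> A \<rightarrow>\<^sub>E T. h ` A \<in> TT} \<subseteq> (\<Union>B\<in>TT. A \<rightarrow>\<^sub>E B)"
    by (auto simp: PiE_def)
  then have "card {h \<in> A \<rightarrow>\<^sub>E T. h ` A \<in> TT} \<le> card (\<Union>B\<in>TT. A \<rightarrow>\<^sub>E B)"
    by (rule card_mono[rotated]) (use fTT fA TT fT in \<open>auto intro!: finite_PiE intro: finite_subset\<close>)
  also have "\<dots> \<le> (\<Sum>B\<in>TT. card (A \<rightarrow>\<^sub>E B))" by (rule card_UN_le[OF fTT])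
  also have "\<dots> = (\<Sum>B\<in>TT. card A ^ card A)"
    using TT fA by (intro sum.cong) (auto simp: card_funcsetE)
  finally show ?thesis by simp
qed

lemma card_funs_images_in_le:
  assumes fI: "finite I" and I: "\<forall>A\<in>I. finite A \<and> card A = D" and fT: "finite T"
    and TT: "TT \<subseteq> {B. B \<subseteq> T \<and> card B = D}"
  shows "card {g \<in> \<Union>I \<rightarrow>\<^sub>E T. \<forall>A\<in>I. g ` A \<in> TT} \<le> (card TT * D ^ D) ^ card I"
proof -
  let ?H = "\<lambda>A. {h \<in> A \<rightarrow>\<^sub>E T. h ` A \<in> TT}"
  let ?r = "\<lambda>g. \<lambda>A\<in>I. restrict g A"
  have "?r ` {g \<in> \<Union>I \<rightarrow>\<^sub>E T. \<forall>A\<in>I. g ` A \<in> TT} \<subseteq> (\<Pi>\<^sub>E A\<in>I. ?H A)"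
    by (auto simp: PiE_def image_restrict_eq)
  moreover have "finite (\<Pi>\<^sub>E A\<in>I. ?H A)"
    using fI I fT by (auto intro!: finite_PiE intro: finite_subset[OF _ finite_PiE[of _ "\<lambda>_. T"]])
  moreover have "inj_on ?r {g \<in> \<Union>I \<rightarrow>\<^sub>E T. \<forall>A\<in>I. g ` A \<in> TT}"
    by (rule inj_on_subset[OF inj_on_restrict_family[of I T]]) blast
  ultimately have "card {g \<in> \<Union>I \<rightarrow>\<^sub>E T. \<forall>A\<in>I. g ` A \<in> TT} \<le> card (\<Pi>\<^sub>E A\<in>I. ?H A)"
    by (intro card_inj_on_le)
  also have "\<dots> = (\<Prod>A\<in>I. card (?H A))" by (rule card_PiE[OF fI])
  also have "\<dots> \<le> (\<Prod>A\<in>I. card TT * D ^ D)"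
    by (rule prod_mono) (use I fT TT in \<open>auto intro!: card_funs_image_in_le[of _ T TT, simplified]\<close>)
  finally show ?thesis by simp
qed

lemma card_inj_funs_images_in_le:
  assumes fS: "finite S" and fT: "finite T"
    and I: "\<forall>A\<in>I. A \<subseteq> S \<and> card A = D" and TT: "TT \<subseteq> {B. B \<subseteq> T \<and> card B = D}"
  shows "card {f \<in> inj_funs S T. \<forall>A\<in>I. f ` A \<in> TT}
    \<le> (card TT * D ^ D) ^ card I * falling_fact (card T - card (\<Union>I)) (card S - card (\<Union>I))"
proof -
  define Q where "Q = (\<lambda>g::'a \<Rightarrow> 'b. \<forall>A\<in>I. g ` A \<in> TT)"
  have US: "\<Union>I \<subseteq> S" using I by auto
  have fI: "finite I" using fS I by (auto intro: finite_subset[of I "Pow S"])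
  have Ifin: "\<forall>A\<in>I. finite A \<and> card A = D" using I fS by (auto intro: finite_subset)
  have "restrict f (\<Union>I) ` A = f ` A" if "A \<in> I" for f :: "'a \<Rightarrow> 'b" and A
    using that by auto
  then have "{f \<in> inj_funs S T. \<forall>A\<in>I. f ` A \<in> TT} = {f \<in> inj_funs S T. Q (restrict f (\<Union>I))}"
    by (auto simp: Q_def)
  then have "card {f \<in> inj_funs S T. \<forall>A\<in>I. f ` A \<in> TT}
      \<le> card {g \<in> inj_funs (\<Union>I) T. Q g} * falling_fact (card T - card (\<Union>I)) (card S - card (\<Union>I))"
    using card_inj_funs_restrict_le[OF fS fT US] by simp
  also have "card {g \<in> inj_funs (\<Union>I) T. Q g} \<le> card {g \<in> \<Union>I \<rightarrow>\<^sub>E T. Q g}"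
    by (intro card_mono) (use fS fT US in
      \<open>auto simp: inj_funs_def intro: finite_subset finite_subset[OF _ finite_PiE[of "\<Union>I" "\<lambda>_. T"]]\<close>)
  also have "\<dots> \<le> (card TT * D ^ D) ^ card I"
    unfolding Q_def using card_funs_images_in_le[OF fI Ifin fT TT] .
  finally show ?thesis by (simp add: mult_le_mono1)
qed

lemma card_inj_funs_images_in_le_power:
  fixes p :: real
  assumes fS: "finite S" and fT: "finite T"
    and I: "\<forall>A\<in>I. A \<subseteq> S \<and> card A = D" and disj: "disjoint I"
    and TT: "TT \<subseteq> {B. B \<subseteq> T \<and> card B = D}" and p: "0 \<le> p"
    and cTT: "real (card TT) * real D ^ D \<le> p * x ^ D"
    and x: "0 \<le> x" "x \<le> real (card T) - real D * real (card I)"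
  shows "real (card {f \<in> inj_funs S T. \<forall>A\<in>I. f ` A \<in> TT})
    \<le> p ^ card I * real (card (inj_funs S T))"
proof -
  define n where "n = card T"
  define u where "u = card (\<Union>I)"
  define F where "F = falling_fact (n - u) (card S - u)"
  have u: "u = D * card I"
    unfolding u_def using I fS disj by (subst card_Union_disjoint) (auto intro: finite_subset)
  have "u \<le> card S" unfolding u_def using I fS by (intro card_mono) auto
  have "real (card {f \<in> inj_funs S T. \<forall>A\<in>I. f ` A \<in> TT})
      \<le> real ((card TT * D ^ D) ^ card I * F)"
    unfolding F_def n_def u_def by (rule of_nat_mono[OF card_inj_funs_images_in_le[OF fS fT I TT]])
  also have "\<dots> = (real (card TT) * real D ^ D) ^ card I * real F" by simp
  also have "\<dots> \<le> (p * (real n - real u) ^ D) ^ card I * real F"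
    using cTT x p by (intro mult_right_mono power_mono order_trans[OF cTT] mult_left_mono)
      (simp_all add: n_def u)
  also have "\<dots> = p ^ card I * real ((n - u) ^ u) * real F"
    using x of_nat_le_iff[of "D * card I" "card T", where 'a = real]
    by (simp add: u n_def power_mult_distrib power_mult of_nat_diff)
  also have "\<dots> \<le> p ^ card I * real (falling_fact n u) * real F"
    using p by (intro mult_right_mono mult_left_mono)
      (simp_all only: of_nat_le_iff power_le_falling_fact zero_le_power of_nat_0_le_iff)
  also have "falling_fact n u * F = card (inj_funs S T)"
    using falling_fact_add[of n u "card S - u"] \<open>u \<le> card S\<close>
    by (simp add: card_inj_funs fS fT F_def n_def)
  then have "p ^ card I * real (falling_fact n u) * real F = p ^ card I * real (card (inj_funs S T))"
    by (simp flip: of_nat_mult mult.assoc)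
  finally show ?thesis .
qed

lemma card_many_satisfied_le:
  fixes p t :: real
  assumes f\<Omega>: "finite \<Omega>" and fX: "finite X" and p: "0 < p" "p \<le> 1"
    and each: "\<And>I. I \<subseteq> X \<Longrightarrow>
      real (card {\<omega> \<in> \<Omega>. \<forall>x\<in>I. P \<omega> x}) \<le> p ^ card I * real (card \<Omega>)"
  shows "real (card {\<omega> \<in> \<Omega>. t \<le> real (card {x \<in> X. P \<omega> x})})
    \<le> 2 ^ card X * p powr t * real (card \<Omega>)"
proof -
  define \<I> where "\<I> = {I. I \<subseteq> X \<and> t \<le> real (card I)}"
  let ?E = "\<lambda>I. {\<omega> \<in> \<Omega>. \<forall>x\<in>I. P \<omega> x}"
  have f\<I>: "finite \<I>" and c\<I>: "card \<I> \<le> 2 ^ card X"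
    using card_mono[of "Pow X" \<I>] fX by (auto simp: \<I>_def card_Pow finite_subset[of \<I> "Pow X"])
  have "{\<omega> \<in> \<Omega>. t \<le> real (card {x \<in> X. P \<omega> x})} \<subseteq> (\<Union>I\<in>\<I>. ?E I)"
  proof
    fix \<omega> assume "\<omega> \<in> {\<omega> \<in> \<Omega>. t \<le> real (card {x \<in> X. P \<omega> x})}"
    then show "\<omega> \<in> (\<Union>I\<in>\<I>. ?E I)"
      by (intro UN_I[of "{x \<in> X. P \<omega> x}"]) (auto simp: \<I>_def)
  qed
  then have "card {\<omega> \<in> \<Omega>. t \<le> real (card {x \<in> X. P \<omega> x})} \<le> card (\<Union>I\<in>\<I>. ?E I)"
    by (rule card_mono[rotated]) (use f\<I> f\<Omega> in auto)
  also have "\<dots> \<le> (\<Sum>I\<in>\<I>. card (?E I))" by (rule card_UN_le[OF f\<I>])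
  finally have "real (card {\<omega> \<in> \<Omega>. t \<le> real (card {x \<in> X. P \<omega> x})})
      \<le> (\<Sum>I\<in>\<I>. real (card (?E I)))"
    by (simp flip: of_nat_sum)
  also have "\<dots> \<le> (\<Sum>I\<in>\<I>. p powr t * real (card \<Omega>))"
  proof (rule sum_mono)
    fix I assume "I \<in> \<I>"
    then have "I \<subseteq> X" "t \<le> real (card I)" by (auto simp: \<I>_def)
    have "p ^ card I = p powr real (card I)" using p by (simp add: powr_realpow)
    also have "\<dots> \<le> p powr t" using p \<open>t \<le> real (card I)\<close> by (intro powr_mono') auto
    finally have "p ^ card I * real (card \<Omega>) \<le> p powr t * real (card \<Omega>)"
      by (rule mult_right_mono) simp
    with each[OF \<open>I \<subseteq> X\<close>]
    show "real (card (?E I)) \<le> p powr t * real (card \<Omega>)" by (rule order_trans)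
  qed
  also have "\<dots> \<le> 2 ^ card X * p powr t * real (card \<Omega>)"
    using c\<I> by (simp add: mult.assoc mult_right_mono flip: of_nat_le_iff)
  finally show ?thesis .
qed

lemma card_images_diff:
  assumes "inj_on f S" and "\<forall>A\<in>SS. A \<subseteq> S" and "finite SS"
  shows "card ((\<lambda>A. f ` A) ` SS - TT) = card SS - card {A \<in> SS. f ` A \<in> TT}"
proof -
  have "inj_on (image f) SS"
    by (rule inj_on_image, rule inj_on_subset[OF assms(1)]) (use assms(2) in blast)
  then have "card ((\<lambda>A. f ` A) ` SS - TT) = card ((\<lambda>A. f ` A) ` (SS - {A \<in> SS. f ` A \<in> TT}))"
    by (intro arg_cong[where f = card]) auto
  also have "\<dots> = card (SS - {A \<in> SS. f ` A \<in> TT})"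
    using \<open>inj_on (image f) SS\<close> by (intro card_image) (auto intro: inj_on_subset)
  also have "\<dots> = card SS - card {A \<in> SS. f ` A \<in> TT}"
    using assms(3) by (intro card_Diff_subset) auto
  finally show ?thesis .
qed

lemma prob_pmf_of_set_ge:
  assumes "finite \<Omega>" "\<Omega> \<noteq> {}" "real (card {\<omega> \<in> \<Omega>. \<omega> \<notin> X}) \<le> c * real (card \<Omega>)"
  shows "1 - c \<le> measure_pmf.prob (pmf_of_set \<Omega>) X"
proof -
  have "card (\<Omega> \<inter> X) = card \<Omega> - card {\<omega> \<in> \<Omega>. \<omega> \<notin> X}"
    using assms(1) by (subst card_Diff_subset[symmetric]) (auto intro: arg_cong[where f = card])
  moreover have "card {\<omega> \<in> \<Omega>. \<omega> \<notin> X} \<le> card \<Omega>"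
    using assms(1) by (intro card_mono) auto
  moreover have "card \<Omega> > 0" using assms(1,2) by auto
  ultimately show ?thesis
    using assms(3) by (simp add: measure_pmf_of_set[OF assms(2,1)] of_nat_diff field_simps)
qed

lemma prob_card_images_outside_gt:
  fixes \<beta> p \<mu> :: real
  assumes fS: "finite S" and fT: "finite T" and ST: "card S \<le> card T"
    and SS: "SS \<subseteq> {A. A \<subseteq> S \<and> card A = D}" and disj: "disjoint SS"
    and TT: "TT \<subseteq> {B. B \<subseteq> T \<and> card B = D}" and p: "0 < p" "p \<le> 1" and \<mu>: "0 \<le> \<mu>"
    and cSS: "real D * real (card SS) \<le> (1 - \<mu>) * real (card T)"
    and cTT: "real (card TT) * real D ^ D \<le> p * (\<mu> * real (card T)) ^ D"
  shows "1 - 2 ^ card SS * p powr (\<beta> * real (card SS))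
    \<le> measure_pmf.prob (pmf_of_set (inj_funs S T))
        {f. real (card ((\<lambda>A. f ` A) ` SS - TT)) > (1 - \<beta>) * real (card SS)}"
proof -
  let ?\<Omega> = "inj_funs S T"
  let ?good = "{f. real (card ((\<lambda>A. f ` A) ` SS - TT)) > (1 - \<beta>) * real (card SS)}"
  have fSS: "finite SS" using SS fS by (auto intro: finite_subset[of SS "Pow S"])
  have "real (card ((\<lambda>A. f ` A) ` SS - TT)) = real (card SS) - real (card {A \<in> SS. f ` A \<in> TT})"
    if "f \<in> ?\<Omega>" for f
  proof -
    have "card {A \<in> SS. f ` A \<in> TT} \<le> card SS" using fSS by (intro card_mono) auto
    moreover have "inj_on f S" using that by (simp add: inj_funs_def)
    ultimately show ?thesis
      using SS fSS by (subst card_images_diff[of f S]) (auto simp: of_nat_diff)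
  qed
  then have bad: "{f \<in> ?\<Omega>. f \<notin> ?good}
      = {f \<in> ?\<Omega>. \<beta> * real (card SS) \<le> real (card {A \<in> SS. f ` A \<in> TT})}"
    by (force simp: algebra_simps)
  have "real (card {f \<in> ?\<Omega>. \<beta> * real (card SS) \<le> real (card {A \<in> SS. f ` A \<in> TT})})
      \<le> 2 ^ card SS * p powr (\<beta> * real (card SS)) * real (card ?\<Omega>)"
  proof (rule card_many_satisfied_le[OF finite_inj_funs[OF fS fT] fSS p])
    fix I assume "I \<subseteq> SS"
    then have "card I \<le> card SS" "disjoint I"
      using fSS disj by (auto intro: card_mono pairwise_subset)
    moreover have "\<mu> * real (card T) \<le> real (card T) - real D * real (card I)"
      using cSS mult_left_mono[of "real (card I)" "real (card SS)" "real D"] \<open>card I \<le> card SS\<close>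
      by (simp add: algebra_simps)
    ultimately show "real (card {f \<in> ?\<Omega>. \<forall>A\<in>I. f ` A \<in> TT}) \<le> p ^ card I * real (card ?\<Omega>)"
      using \<open>I \<subseteq> SS\<close> SS \<mu> p by (intro card_inj_funs_images_in_le_power[OF fS fT _ _ TT _ cTT]) auto
  qed
  moreover have "?\<Omega> \<noteq> {}"
    using falling_fact_pos[OF ST] card_inj_funs[OF fS fT] by force
  ultimately show ?thesis
    using finite_inj_funs[OF fS fT] by (intro prob_pmf_of_set_ge) (simp_all only: bad not_False_eq_True)
qed

theorem lemma11p9:
  fixes \<Delta> :: nat and \<beta> \<mu>S :: real
  assumes "\<Delta> > 0" and "\<beta> > 0" and "\<mu>S > 0"
  shows "\<exists>\<mu>T::real. \<mu>T > 0 \<and>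
    (\<forall>(S::'a set) T (SS::'a set set) (TT::'a set set).
      finite S \<longrightarrow> finite T \<longrightarrow> card S \<le> card T \<longrightarrow> S \<inter> T = {} \<longrightarrow>
      SS \<subseteq> {A. A \<subseteq> S \<and> card A = \<Delta>} \<longrightarrow>
      (\<forall>A\<in>SS. \<forall>B\<in>SS. A \<noteq> B \<longrightarrow> A \<inter> B = {}) \<longrightarrow>
      real (card SS) \<le> (1 / real \<Delta>) * (1 - \<mu>S) * real (card T) \<longrightarrow>
      TT \<subseteq> {B. B \<subseteq> T \<and> card B = \<Delta>} \<longrightarrow>
      real (card TT) \<le> \<mu>T * real (card T) ^ \<Delta> \<longrightarrow>
      measure_pmf.prob (pmf_of_set (inj_funs S T))
        {f. real (card ((\<lambda>A. f ` A) ` SS - TT)) > (1 - \<beta>) * real (card SS)}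
        \<ge> 1 - \<beta> ^ card SS)"
proof (cases "\<beta> < 1")
  case False
  have "1 - \<beta> ^ k \<le> measure_pmf.prob P X" for P X and k :: nat
    using False one_le_power[of \<beta> k] measure_nonneg[of "measure_pmf P" X] by linarith
  then show ?thesis by (intro exI[of _ 1]) auto
next
  case True
  define p where "p = (\<beta> / 2) powr (1 / \<beta>)"
  \<comment> \<open>capped so that the room \<open>(1 - \<mu>) |T|\<close> left by the blocks is never negative\<close>
  define \<mu> where "\<mu> = min \<mu>S 1"
  have p: "0 < p" "p \<le> 1" using assms(2) True by (auto simp: p_def powr_le1)
  have p_powr: "2 ^ k * p powr (\<beta> * real k) = \<beta> ^ k" for k :: nat
    using assms(2) by (simp add: p_def powr_powr powr_realpow power_mult_distrib[symmetric])
  have \<mu>: "0 < \<mu>" "\<mu> \<le> \<mu>S" using assms(3) by (auto simp: \<mu>_def)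
  show ?thesis
  proof (intro exI[of _ "p * \<mu> ^ \<Delta> / real \<Delta> ^ \<Delta>"] conjI allI impI)
    show "0 < p * \<mu> ^ \<Delta> / real \<Delta> ^ \<Delta>" using p \<mu> assms(1) by simp
    fix S T :: "'a set" and SS TT :: "'a set set"
    assume fS: "finite S" and fT: "finite T" and ST: "card S \<le> card T"
      and SS: "SS \<subseteq> {A. A \<subseteq> S \<and> card A = \<Delta>}"
      and disj: "\<forall>A\<in>SS. \<forall>B\<in>SS. A \<noteq> B \<longrightarrow> A \<inter> B = {}"
      and cSS: "real (card SS) \<le> (1 / real \<Delta>) * (1 - \<mu>S) * real (card T)"
      and TT: "TT \<subseteq> {B. B \<subseteq> T \<and> card B = \<Delta>}"
      and cTT: "real (card TT) \<le> p * \<mu> ^ \<Delta> / real \<Delta> ^ \<Delta> * real (card T) ^ \<Delta>"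
    have "real \<Delta> * real (card SS) \<le> (1 - \<mu>S) * real (card T)"
      using cSS assms(1) by (simp add: field_simps)
    also have "\<dots> \<le> (1 - \<mu>) * real (card T)" using \<mu>(2) by (intro mult_right_mono) auto
    moreover have "real (card TT) * real \<Delta> ^ \<Delta> \<le> p * (\<mu> * real (card T)) ^ \<Delta>"
      using cTT assms(1) by (simp add: field_simps power_mult_distrib)
    moreover have "disjoint SS" using disj by (auto simp: pairwise_def disjnt_def)
    ultimately have "1 - 2 ^ card SS * p powr (\<beta> * real (card SS))
      \<le> measure_pmf.prob (pmf_of_set (inj_funs S T))
        {f. real (card ((\<lambda>A. f ` A) ` SS - TT)) > (1 - \<beta>) * real (card SS)}"
      using \<mu>(1) by (intro prob_card_images_outside_gt[OF fS fT ST SS _ TT p]) simp_all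
    then show "1 - \<beta> ^ card SS \<le> measure_pmf.prob (pmf_of_set (inj_funs S T))
        {f. real (card ((\<lambda>A. f ` A) ` SS - TT)) > (1 - \<beta>) * real (card SS)}"
      by (simp only: p_powr)
  qed
qed

end
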